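(* Consider ballistic deposition started from the empty configuration. There is a constant $\kappa>0$ such that for all $N$, all integers $H>2$ and every site $i\in G_N$, $$P\big(\sigma_i(N)>H\big)\le e^{-\kappa H}.$$
   Context: Ballistic deposition: for $N\ge2$, $G_N=\{1,\dots,N\}$, a configuration $\sigma\in\mathbb N^N$ gives column heights. Given $\sigma$, an explorer is a walk $(X_n,Z_n)_{n\ge0}$ with $(X_n)$ i.i.d. uniform on $G_N$, $Z_0=\max_i\sigma_i+1$ and $Z_{n+1}=Z_n-1$. With $n^*=\inf\{n:Z_n\le\sigma_{X_n}\}$, the configuration becomes $\sigma+e_{X_{n^*}}$. Explorers are sent successively and independently; $\sigma(t)$ is the configuration after $t$ explorers, $\sigma(0)=(0,\dots,0)$. *)

theory Defs
  imports "HOL-Probability.Probability"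
begin

text \<open>Ballistic deposition on G_N = {1..N}. A configuration is a function
  sigma :: nat => nat (only the values on {1..N} matter; others stay 0).\<close>

text \<open>Landing column of an explorer currently at height z above configuration sigma:
  a uniform column x is drawn; if z <= sigma x the explorer stops at x,
  otherwise it descends to height z - 1 and draws a fresh column.
  At height 0 it always stops, since sigma x >= 0.\<close>
fun bd_land :: "nat \<Rightarrow> (nat \<Rightarrow> nat) \<Rightarrow> nat \<Rightarrow> nat pmf" where
  "bd_land N \<sigma> 0 = pmf_of_set {1..N}"
| "bd_land N \<sigma> (Suc z) =
     pmf_of_set {1..N} \<bind> (\<lambda>x. if Suc z \<le> \<sigma> x then return_pmf x else bd_land N \<sigma> z)"

definition bd_step :: "nat \<Rightarrow> (nat \<Rightarrow> nat) \<Rightarrow> (nat \<Rightarrow> nat) pmf" where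
  "bd_step N \<sigma> = map_pmf (\<lambda>x. \<sigma>(x := Suc (\<sigma> x))) (bd_land N \<sigma> (Max (\<sigma> ` {1..N}) + 1))"

fun bd_config :: "nat \<Rightarrow> nat \<Rightarrow> (nat \<Rightarrow> nat) pmf" where
  "bd_config N 0 = return_pmf (\<lambda>_. 0)"
| "bd_config N (Suc t) = bd_config N t \<bind> bd_step N"

end

theory Submission
  imports Defs
begin

text \<open>An explorer released above the top of the pile stops at column \<open>i\<close> only at one of the
  \<open>\<sigma>\<^sub>i + 1\<close> heights \<open>\<le> \<sigma>\<^sub>i\<close>, each time with probability \<open>1/N\<close>, so
  \<open>P(\<sigma>\<^sub>i grows) \<le> (\<sigma>\<^sub>i + 1)/N\<close>. Hence \<open>E[b^\<sigma>\<^sub>i]\<close> grows per deposition by at most the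
  factor \<open>1 + (b - 1)(\<sigma>\<^sub>i + 1)/N\<close>, which Bernoulli's inequality absorbs into a slightly larger
  base \<open>b(1 + (b - 1)/N)\<close>. Running this backwards from the horizon \<open>N\<close> with the bases
  \<open>b\<^sub>k = 1/(1 - w(1 + 1/N)\<^sup>k)\<close>, which stay bounded because \<open>(1 + 1/N)\<^sup>N \<le> e\<close>, bounds an
  exponential moment of \<open>\<sigma>\<^sub>i(N)\<close> uniformly in \<open>N\<close>; Markov's inequality gives the tail.\<close>

lemma pmf_bd_land_Suc_le:
  assumes N: "N \<ge> 1"
  shows "pmf (bd_land N \<sigma> (Suc z)) i
    \<le> (if Suc z \<le> \<sigma> i then 1 else 0) / real N + pmf (bd_land N \<sigma> z) i"
proof -
  let ?p = "pmf (bd_land N \<sigma> z) i"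
  let ?c = "if Suc z \<le> \<sigma> i then 1 else 0 :: real"
  have ne: "{1..N} \<noteq> {}" using N by simp
  have "pmf (bd_land N \<sigma> (Suc z)) i =
      (\<Sum>x\<in>{1..N}. pmf (if Suc z \<le> \<sigma> x then return_pmf x else bd_land N \<sigma> z) i) / real N"
    by (simp only: bd_land.simps pmf_bind integral_pmf_of_set[OF ne finite_atLeastAtMost]
        card_atLeastAtMost diff_Suc_1)
  also have "\<dots> \<le> (\<Sum>x\<in>{1..N}. (if x = i then ?c else 0) + ?p) / real N"
    by (intro divide_right_mono sum_mono) (auto simp: pmf_return indicator_def)
  also have "\<dots> \<le> (?c + real N * ?p) / real N"
    by (intro divide_right_mono) (auto simp: sum.distrib sum.delta)
  also have "\<dots> = ?c / real N + ?p" using N by (simp add: field_simps)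
  finally show ?thesis .
qed

lemma pmf_bd_land_le:
  assumes N: "N \<ge> 1"
  shows "pmf (bd_land N \<sigma> z) i \<le> (real (min z (\<sigma> i)) + 1) / real N"
proof (induction z)
  case 0
  show ?case using N by (simp add: pmf_of_set indicator_def)
next
  case (Suc z)
  with pmf_bd_land_Suc_le[OF N, of \<sigma> z i]
  have "pmf (bd_land N \<sigma> (Suc z)) i
      \<le> (if Suc z \<le> \<sigma> i then 1 else 0) / real N + (real (min z (\<sigma> i)) + 1) / real N"
    by linarith
  also have "\<dots> \<le> (real (min (Suc z) (\<sigma> i)) + 1) / real N"
    using N by (auto simp: field_simps min_def)
  finally show ?case .
qed

lemma nn_integral_bd_step_power_le:
  assumes N: "N \<ge> 1" and b: "b \<ge> (1::real)"
  shows "(\<integral>\<^sup>+\<tau>. ennreal (b ^ \<tau> i) \<partial>bd_step N \<sigma>)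
     \<le> ennreal (b ^ \<sigma> i * (1 + (b - 1) * (real (\<sigma> i) + 1) / real N))"
proof -
  let ?M = "bd_land N \<sigma> (Max (\<sigma> ` {1..N}) + 1)"
  have incr: "ennreal (b ^ (\<sigma>(x := Suc (\<sigma> x))) i) =
      ennreal (b ^ \<sigma> i) + ennreal (b ^ \<sigma> i * (b - 1)) * indicator {i} x" for x
    using b by (cases "x = i") (auto simp: algebra_simps simp flip: ennreal_plus)
  have land: "pmf ?M i \<le> (real (\<sigma> i) + 1) / real N"
    by (rule order.trans[OF pmf_bd_land_le[OF N]]) (auto intro!: divide_right_mono)
  have "(\<integral>\<^sup>+\<tau>. ennreal (b ^ \<tau> i) \<partial>bd_step N \<sigma>)
      = ennreal (b ^ \<sigma> i) + ennreal (b ^ \<sigma> i * (b - 1)) * ennreal (pmf ?M i)"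
    unfolding bd_step_def nn_integral_map_pmf incr
    by (simp add: nn_integral_add nn_integral_cmult_indicator emeasure_pmf_single
        measure_pmf.emeasure_space_1 del: bd_land.simps)
  also have "\<dots> = ennreal (b ^ \<sigma> i + b ^ \<sigma> i * (b - 1) * pmf ?M i)"
    using b by (simp flip: ennreal_plus ennreal_mult)
  also have "\<dots> \<le> ennreal (b ^ \<sigma> i * (1 + (b - 1) * (real (\<sigma> i) + 1) / real N))"
  proof (rule ennreal_leI)
    have "b ^ \<sigma> i * (b - 1) * pmf ?M i \<le> b ^ \<sigma> i * (b - 1) * ((real (\<sigma> i) + 1) / real N)"
      using land b by (intro mult_left_mono) auto
    moreover have "b ^ \<sigma> i * (1 + (b - 1) * (real (\<sigma> i) + 1) / real N)
        = b ^ \<sigma> i + b ^ \<sigma> i * (b - 1) * ((real (\<sigma> i) + 1) / real N)"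
      by (simp add: field_simps)
    ultimately show "b ^ \<sigma> i + b ^ \<sigma> i * (b - 1) * pmf ?M i
        \<le> b ^ \<sigma> i * (1 + (b - 1) * (real (\<sigma> i) + 1) / real N)"
      by linarith
  qed
  finally show ?thesis .
qed

lemma power_mult_Bernoulli_le:
  fixes b c n :: real
  assumes n: "n > 0" and b: "b \<ge> 1" and c: "b * (1 + (b - 1) / n) \<le> c"
  shows "b ^ s * (1 + (b - 1) * (real s + 1) / n) \<le> (1 + (b - 1) / n) * c ^ s"
proof -
  let ?y = "(b - 1) / n"
  have y: "?y \<ge> 0" using b n by simp
  have "1 + real (Suc s) * ?y \<le> (1 + ?y) ^ Suc s"
    by (rule Bernoulli_inequality) (use y in linarith)
  hence "b ^ s * (1 + (b - 1) * (real s + 1) / n) \<le> b ^ s * (1 + ?y) ^ Suc s"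
    using b by (intro mult_left_mono) (auto simp: algebra_simps)
  also have "\<dots> = (1 + ?y) * (b * (1 + ?y)) ^ s" by (simp add: power_mult_distrib)
  also have "\<dots> \<le> (1 + ?y) * c ^ s"
    using c b y by (intro mult_left_mono power_mono) auto
  finally show ?thesis .
qed

lemma nn_integral_bd_step_power_le_shifted:
  assumes N: "N \<ge> 1" and b: "b \<ge> 1" and c: "b * (1 + (b - 1) / real N) \<le> c"
  shows "(\<integral>\<^sup>+\<tau>. ennreal (b ^ \<tau> i) \<partial>bd_step N \<sigma>)
     \<le> ennreal (1 + (b - 1) / real N) * ennreal (c ^ \<sigma> i)"
proof -
  have "(\<integral>\<^sup>+\<tau>. ennreal (b ^ \<tau> i) \<partial>bd_step N \<sigma>)
      \<le> ennreal (b ^ \<sigma> i * (1 + (b - 1) * (real (\<sigma> i) + 1) / real N))"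
    by (rule nn_integral_bd_step_power_le[OF N b])
  also have "\<dots> \<le> ennreal ((1 + (b - 1) / real N) * c ^ \<sigma> i)"
    using N by (intro ennreal_leI power_mult_Bernoulli_le b c) simp
  also have "\<dots> = ennreal (1 + (b - 1) / real N) * ennreal (c ^ \<sigma> i)"
  proof (rule ennreal_mult)
    have "b \<le> b * (1 + (b - 1) / real N)" using b by simp
    hence "0 \<le> c" using b c by linarith
    thus "0 \<le> c ^ \<sigma> i" by simp
  qed (use b in simp)
  finally show ?thesis .
qed

lemma inverse_one_minus_recursion_le:
  fixes u n :: real
  assumes n: "n > 0" and u: "u \<ge> 0" "u * (1 + 1 / n) < 1"
  shows "1 / (1 - u) * (1 + (1 / (1 - u) - 1) / n) \<le> 1 / (1 - u * (1 + 1 / n))"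
proof -
  have u1: "u < 1" using u n by (smt (verit) divide_nonneg_nonneg mult_less_cancel_left2)
  have pos: "1 - u - u / n > 0" using u by (simp add: algebra_simps)
  have "(n * (1 - u) + u) * (1 - u - u / n) \<le> n * (1 - u)^2"
    using n by (simp add: field_simps power2_eq_square)
  hence "(n * (1 - u) + u) / (n * (1 - u)^2) \<le> 1 / (1 - u - u / n)"
    using pos u1 n by (simp add: field_simps)
  moreover have "1 / (1 - u) * (1 + (1 / (1 - u) - 1) / n) = (n * (1 - u) + u) / (n * (1 - u)^2)"
    using u1 n by (simp add: field_simps power2_eq_square)
  ultimately show ?thesis by (simp add: algebra_simps)
qed

definition moment_base :: "nat \<Rightarrow> real \<Rightarrow> nat \<Rightarrow> real" where
  "moment_base N w k = 1 / (1 - w * (1 + 1 / real N) ^ k)"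

lemma moment_base_ge_1:
  assumes w: "w \<ge> 0" "w * (1 + 1 / real N) ^ T < 1" and k: "k \<le> T"
  shows "moment_base N w k \<ge> 1"
proof -
  have "w * (1 + 1 / real N) ^ k \<le> w * (1 + 1 / real N) ^ T"
    using k w by (intro mult_left_mono power_increasing) auto
  moreover have "0 \<le> w * (1 + 1 / real N) ^ k" using w by simp
  ultimately show ?thesis using w unfolding moment_base_def by (simp add: field_simps)
qed

lemma moment_base_Suc_ge:
  assumes N: "N \<ge> 1" and w: "w \<ge> 0" "w * (1 + 1 / real N) ^ T < 1" and k: "Suc k \<le> T"
  shows "moment_base N w k * (1 + (moment_base N w k - 1) / real N) \<le> moment_base N w (Suc k)"
proof -
  let ?u = "w * (1 + 1 / real N) ^ k"
  have "w * (1 + 1 / real N) ^ Suc k \<le> w * (1 + 1 / real N) ^ T"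
    using k w by (intro mult_left_mono power_increasing) auto
  hence "?u * (1 + 1 / real N) < 1" using w by (simp add: algebra_simps)
  with N w have "1 / (1 - ?u) * (1 + (1 / (1 - ?u) - 1) / real N) \<le> 1 / (1 - ?u * (1 + 1 / real N))"
    by (intro inverse_one_minus_recursion_le) auto
  thus ?thesis unfolding moment_base_def by (simp add: algebra_simps)
qed

lemma nn_integral_bd_config_power_le:
  assumes N: "N \<ge> 1" and w: "w \<ge> 0" "w * (1 + 1 / real N) ^ T < 1" and "t \<le> T"
  shows "(\<integral>\<^sup>+\<sigma>. ennreal (moment_base N w (T - t) ^ \<sigma> i) \<partial>bd_config N t)
    \<le> ennreal (moment_base N w T / moment_base N w (T - t))"
  using \<open>t \<le> T\<close>
proof (induction t)
  case 0
  show ?case using moment_base_ge_1[OF w order.refl] by simp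
next
  case (Suc t)
  define b where "b = moment_base N w (T - Suc t)"
  define c where "c = moment_base N w (T - t)"
  have c_eq: "c = moment_base N w (Suc (T - Suc t))" using Suc.prems by (simp add: c_def Suc_diff_Suc)
  have b1: "b \<ge> 1" and c1: "c \<ge> 1" and bT: "moment_base N w T \<ge> 1"
    using moment_base_ge_1[OF w] Suc.prems by (auto simp: b_def c_def)
  have bc: "b * (1 + (b - 1) / real N) \<le> c"
    unfolding b_def c_eq using moment_base_Suc_ge[OF N w] Suc.prems by simp
  have "(\<integral>\<^sup>+\<sigma>. ennreal (b ^ \<sigma> i) \<partial>bd_config N (Suc t))
      = (\<integral>\<^sup>+\<sigma>. (\<integral>\<^sup>+\<tau>. ennreal (b ^ \<tau> i) \<partial>bd_step N \<sigma>) \<partial>bd_config N t)"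
    by (simp add: nn_integral_bind_pmf)
  also have "\<dots> \<le> (\<integral>\<^sup>+\<sigma>. ennreal (1 + (b - 1) / real N) * ennreal (c ^ \<sigma> i) \<partial>bd_config N t)"
    by (intro nn_integral_mono nn_integral_bd_step_power_le_shifted N b1 bc)
  also have "\<dots> = ennreal (1 + (b - 1) / real N) * (\<integral>\<^sup>+\<sigma>. ennreal (c ^ \<sigma> i) \<partial>bd_config N t)"
    by (rule nn_integral_cmult) simp
  also have "\<dots> \<le> ennreal (1 + (b - 1) / real N) * ennreal (moment_base N w T / c)"
    using Suc by (intro mult_left_mono) (auto simp: c_def)
  also have "\<dots> = ennreal ((1 + (b - 1) / real N) / c * moment_base N w T)"
    using b1 c1 bT by (subst ennreal_mult[symmetric]) auto
  also have "\<dots> \<le> ennreal (1 / b * moment_base N w T)"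
    using bc b1 c1 bT by (intro ennreal_leI mult_right_mono) (auto simp: field_simps)
  finally show ?case by (simp add: b_def)
qed

lemma one_plus_inverse_power_le_3: "(1 + 1 / real n) ^ n \<le> 3"
proof (cases "n = 0")
  case False
  have "(1 + 1 / real n) ^ n \<le> exp (1 / real n) ^ n"
    by (intro power_mono) (auto simp: exp_ge_add_one_self add.commute)
  also have "\<dots> = exp 1" using False by (simp flip: exp_of_nat_mult)
  also have "\<dots> \<le> 3" by (rule exp_le)
  finally show ?thesis .
qed simp

lemma nn_integral_bd_config_power_9_8_le:
  assumes N: "N \<ge> 1"
  shows "(\<integral>\<^sup>+\<sigma>. ennreal ((9/8) ^ \<sigma> i) \<partial>bd_config N N) \<le> ennreal (4/3)"
proof -
  define w :: real where "w = 1/9"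
  have "w * (1 + 1 / real N) ^ N \<le> 1/3"
    using one_plus_inverse_power_le_3[of N] by (simp add: w_def)
  moreover have "0 \<le> w * (1 + 1 / real N) ^ N" by (simp add: w_def)
  ultimately have base_N: "moment_base N w N \<le> 3/2" and w1: "w * (1 + 1 / real N) ^ N < 1"
    by (auto simp: moment_base_def field_simps)
  have base_0: "moment_base N w 0 = 9/8" by (simp add: moment_base_def w_def)
  have "(\<integral>\<^sup>+\<sigma>. ennreal ((9/8) ^ \<sigma> i) \<partial>bd_config N N)
      = (\<integral>\<^sup>+\<sigma>. ennreal (moment_base N w (N - N) ^ \<sigma> i) \<partial>bd_config N N)"
    by (simp add: base_0)
  also have "\<dots> \<le> ennreal (moment_base N w N / moment_base N w 0)"
    using nn_integral_bd_config_power_le[OF N _ w1 order.refl] by (simp add: w_def)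
  also have "\<dots> \<le> ennreal (4/3)"
    unfolding base_0 using base_N by (intro ennreal_leI) simp
  finally show ?thesis .
qed

lemma prob_gt_le_power_moment:
  fixes M :: "'a pmf" and f :: "'a \<Rightarrow> nat" and a C :: real
  assumes a: "a \<ge> 1" and C: "C \<ge> 0"
    and moment: "(\<integral>\<^sup>+x. ennreal (a ^ f x) \<partial>M) \<le> ennreal C"
  shows "measure_pmf.prob M {x. f x > H} \<le> C / a ^ Suc H"
proof -
  have a0: "a ^ Suc H > 0" using a by simp
  have "indicator {x. f x > H} x \<le> ennreal (a ^ f x) * ennreal (1 / a ^ Suc H)" for x
  proof (cases "f x > H")
    case True
    hence "a ^ Suc H \<le> a ^ f x" using a by (intro power_increasing) auto
    hence "1 \<le> a ^ f x / a ^ Suc H" using a0 by (simp add: le_divide_eq)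
    thus ?thesis using True a by (simp flip: ennreal_mult)
  qed simp
  hence "emeasure M {x. f x > H} \<le> (\<integral>\<^sup>+x. ennreal (a ^ f x) * ennreal (1 / a ^ Suc H) \<partial>M)"
    by (simp flip: nn_integral_indicator add: nn_integral_mono)
  also have "\<dots> = (\<integral>\<^sup>+x. ennreal (a ^ f x) \<partial>M) * ennreal (1 / a ^ Suc H)"
    by (rule nn_integral_multc) simp
  also have "\<dots> \<le> ennreal C * ennreal (1 / a ^ Suc H)"
    using moment by (rule mult_right_mono) simp
  also have "\<dots> = ennreal (C / a ^ Suc H)"
    using C a0 by (simp flip: ennreal_mult)
  finally show ?thesis using C a0 by (simp add: measure_pmf.emeasure_eq_measure)
qed

lemma power_8_9_le_exp:
  assumes "H \<ge> 3"
  shows "32/27 * (8/9) ^ H \<le> exp (- ln (20/19) * real H)"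
proof -
  have "32/27 \<le> (171/160::real) ^ 3" by (simp add: power3_eq_cube)
  also have "\<dots> \<le> (171/160) ^ H" using assms by (intro power_increasing) auto
  finally have "32/27 * (8/9::real) ^ H \<le> (171/160 * (8/9)) ^ H"
    unfolding power_mult_distrib by (intro mult_right_mono) auto
  also have "\<dots> = exp (- ln (20/19)) ^ H"
    by (simp add: exp_minus)
  also have "\<dots> = exp (- ln (20/19) * real H)"
    by (simp add: exp_of_nat_mult[symmetric] mult.commute)
  finally show ?thesis .
qed

theorem proposition6p1:
  shows "\<exists>\<kappa>::real. \<kappa> > 0 \<and>
    (\<forall>N::nat. N \<ge> 2 \<longrightarrow> (\<forall>H::nat. H > 2 \<longrightarrow> (\<forall>i\<in>{1..N}.
       measure_pmf.prob (bd_config N N) {\<sigma>. \<sigma> i > H} \<le> exp (- \<kappa> * real H))))"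
proof (intro exI[of _ "ln (20/19)"] conjI allI impI ballI)
  show "ln (20/19::real) > 0" by simp
  fix N H i :: nat
  assume "N \<ge> 2" "H > 2"
  hence "measure_pmf.prob (bd_config N N) {\<sigma>. \<sigma> i > H} \<le> (4/3) / (9/8) ^ Suc H"
    by (intro prob_gt_le_power_moment nn_integral_bd_config_power_9_8_le) auto
  also have "\<dots> = 32/27 * (8/9) ^ H"
    by (simp add: power_divide field_simps)
  also have "\<dots> \<le> exp (- ln (20/19) * real H)"
    using \<open>H > 2\<close> by (intro power_8_9_le_exp) simp
  finally show "measure_pmf.prob (bd_config N N) {\<sigma>. \<sigma> i > H} \<le> exp (- ln (20/19) * real H)" .
qed

end
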